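(* Let $K$ be a field, $\Lambda=\mathrm{diag}(a_1,\dots,a_n)$, $P=(p_{st})\in GL_n(K)$, $A=P^{-1}\Lambda P$, and $B=\mathrm{diag}(b_1,\dots,b_n)$, with all $a_i,b_i\in K$. Then $$T(A,B)=(-1)^{\lfloor n/2\rfloor}\,\delta(a_1,\dots,a_n)^n\,\delta(b_1,\dots,b_n)^n\,\frac{1}{(\det P)^n}\prod_{s=1}^n\prod_{t=1}^n p_{st}.$$
   Context: $M(A,B)\in M_{n^2}(K)$ is the block matrix of $n\times n$ blocks whose $(i,j)$-th block is $A^{j-1}B^{i-1}$ ($i,j=1,\dots,n$), and $T(A,B)=\det M(A,B)$. $\delta(x_1,\dots,x_n)=\prod_{s<t}(x_t-x_s)$. *)

theory Defs
  imports "Jordan_Normal_Form.Determinant"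
begin

definition diag_matrix :: "nat \<Rightarrow> (nat \<Rightarrow> 'a::zero) \<Rightarrow> 'a mat" where
  "diag_matrix n d = mat n n (\<lambda>(i,j). if i = j then d i else 0)"

text \<open>M(A,B): n^2 x n^2 block matrix of n x n blocks; block (i,j) (1-indexed) is
  A^(j-1) B^(i-1).\<close>
definition M_mat :: "nat \<Rightarrow> 'a::comm_ring_1 mat \<Rightarrow> 'a mat \<Rightarrow> 'a mat" where
  "M_mat n A B = mat (n*n) (n*n)
     (\<lambda>(r,c). ((A ^\<^sub>m (c div n)) * (B ^\<^sub>m (r div n))) $$ (r mod n, c mod n))"

definition T_det :: "nat \<Rightarrow> 'a::comm_ring_1 mat \<Rightarrow> 'a mat \<Rightarrow> 'a" where
  "T_det n A B = det (M_mat n A B)"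

definition vdm_delta :: "nat \<Rightarrow> (nat \<Rightarrow> 'a::comm_ring_1) \<Rightarrow> 'a" where
  "vdm_delta n x = (\<Prod>t<n. \<Prod>s<t. x t - x s)"

end

theory Submission
  imports Defs
begin

(* Index the rows and columns of M(A,B) by pairs (i,k): block i, position k inside the block.
  Since A^j = P^-1 Lambda^j P, the entry of M at ((i,k),(j,l)) is
  sum_m b_l^i (P^-1)_km p_ml a_m^j, so M = F G V with
  F((i,k),(j,l)) = [k = l] b_j^i,  G((i,k),(j,l)) = [i = l] (P^-1)_kj p_ji,  V((i,k),(j,l)) = [k = l] a_i^j.
  F and V are (transposed) Vandermonde matrices tensored with the identity, so their determinants
  are delta(b)^n and delta(a)^n. Swapping the two components of the column index turns G into the
  block-diagonal matrix with blocks P^-1 diag(p_1i, ..., p_ni); this swap is an involution moving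
  n^2 - n points, so its sign is (-1)^((n^2 - n)/2) = (-1)^(n div 2). *)

section \<open>Matrices indexed by pairs\<close>

lemma sum_lessThan_square:
  "(\<Sum>r<n*n. g r) = (\<Sum>i<n. \<Sum>k<n. g (i*n + k :: nat))"
proof -
  have "(\<Sum>r<n*n. g r) = (\<Sum>i<n. sum g {i*n..<i*n + n})"
    by (rule sum.nat_group[symmetric])
  also have "\<dots> = (\<Sum>i<n. \<Sum>k<n. g (i*n + k))"
    using sum.shift_bounds_nat_ivl[of g 0 "i*n" n for i]
    by (simp add: atLeast0LessThan add.commute)
  finally show ?thesis .
qed

lemma pair_index_less: "i < n \<Longrightarrow> k < n \<Longrightarrow> i*n + k < n*(n::nat)"
proof -
  assume "i < n" "k < n"
  then have "i*n + k < Suc i * n" by simp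
  also have "\<dots> \<le> n*n" using \<open>i < n\<close> by (intro mult_le_mono1) simp
  finally show ?thesis .
qed

lemma pair_component_less: "r < n*n \<Longrightarrow> r div n < n" "r < n*n \<Longrightarrow> r mod n < (n::nat)"
  by (simp_all add: less_mult_imp_div_less) (cases "n = 0"; simp)

definition pair_mat :: "nat \<Rightarrow> (nat \<Rightarrow> nat \<Rightarrow> nat \<Rightarrow> nat \<Rightarrow> 'a) \<Rightarrow> 'a mat" where
  "pair_mat n f = mat (n*n) (n*n) (\<lambda>(r,c). f (r div n) (r mod n) (c div n) (c mod n))"

lemma pair_mat_carrier [simp]: "pair_mat n f \<in> carrier_mat (n*n) (n*n)"
  by (simp add: pair_mat_def)

lemma dim_pair_mat [simp]: "dim_row (pair_mat n f) = n*n" "dim_col (pair_mat n f) = n*n"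
  by (simp_all add: pair_mat_def)

lemma index_pair_mat [simp]:
  "r < n*n \<Longrightarrow> c < n*n \<Longrightarrow> pair_mat n f $$ (r,c) = f (r div n) (r mod n) (c div n) (c mod n)"
  by (simp add: pair_mat_def)

lemma pair_mat_cong:
  assumes "\<And>i k j l. i < n \<Longrightarrow> k < n \<Longrightarrow> j < n \<Longrightarrow> l < n \<Longrightarrow> f i k j l = g i k j l"
  shows "pair_mat n f = pair_mat n g"
  using assms by (intro eq_matI) (auto simp: pair_component_less)

lemma pair_mat_mult:
  "pair_mat n f * pair_mat n (g :: nat \<Rightarrow> nat \<Rightarrow> nat \<Rightarrow> nat \<Rightarrow> 'a::semiring_0) =
   pair_mat n (\<lambda>i k j l. \<Sum>p<n. \<Sum>q<n. f i k p q * g p q j l)"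
proof (rule eq_matI)
  fix r c assume "r < dim_row (pair_mat n (\<lambda>i k j l. \<Sum>p<n. \<Sum>q<n. f i k p q * g p q j l))"
    and "c < dim_col (pair_mat n (\<lambda>i k j l. \<Sum>p<n. \<Sum>q<n. f i k p q * g p q j l))"
  then have rc: "r < n*n" "c < n*n" by simp_all
  have "(pair_mat n f * pair_mat n g) $$ (r,c) = (\<Sum>x<n*n. pair_mat n f $$ (r,x) * pair_mat n g $$ (x,c))"
    using rc by (simp add: scalar_prod_def atLeast0LessThan)
  also have "\<dots> = (\<Sum>p<n. \<Sum>q<n. f (r div n) (r mod n) p q * g p q (c div n) (c mod n))"
    using rc by (simp add: sum_lessThan_square pair_index_less)
  finally show "(pair_mat n f * pair_mat n g) $$ (r,c) =
    pair_mat n (\<lambda>i k j l. \<Sum>p<n. \<Sum>q<n. f i k p q * g p q j l) $$ (r,c)"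
    using rc by simp
qed simp_all

lemma pair_mat_tensor_identity_mult:
  "pair_mat n (\<lambda>i k j l. if k = l then C i j else 0) * pair_mat n g =
    pair_mat n (\<lambda>i k j l. \<Sum>p<n. C i p * g p k j l :: 'a::semiring_0)"
  unfolding pair_mat_mult
  by (rule pair_mat_cong) (simp add: if_distrib[of "\<lambda>x. x * y" for y] cong: if_cong)

lemma pair_mat_mult_tensor_identity:
  "pair_mat n f * pair_mat n (\<lambda>i k j l. if k = l then C i j else 0) =
    pair_mat n (\<lambda>i k j l. \<Sum>p<n. f i k p l * C p j :: 'a::semiring_0)"
  unfolding pair_mat_mult
  by (rule pair_mat_cong) (simp add: if_distrib[of "\<lambda>x. y * x" for y] cong: if_cong)

section \<open>The sign of an involution\<close>

lemma transpose_comp_involution: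
  assumes "\<And>z. f (f z) = z"
  shows "(Transposition.transpose x (f x) \<circ> f) z = (if z = x \<or> z = f x then z else f z)"
  using assms by (auto simp: Transposition.transpose_def) (metis assms)

lemma sign_involution:
  assumes "\<And>x. f (f x) = x" and "finite {x. f x \<noteq> x}"
  shows "sign f = (-1::int) ^ (card {x. f x \<noteq> x} div 2)"
  using assms
proof (induction "card {x. f x \<noteq> x}" arbitrary: f rule: less_induct)
  case less
  show ?case
  proof (cases "\<exists>x. f x \<noteq> x")
    case False
    then have "f = id" by auto
    then show ?thesis by simp
  next
    case True
    then obtain x where x: "f x \<noteq> x" by blast
    define g where "g = Transposition.transpose x (f x) \<circ> f"
    have g: "g z = (if z = x \<or> z = f x then z else f z)" for z
      unfolding g_def by (rule transpose_comp_involution) (rule less.prems(1))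
    have g_involution: "g (g z) = z" for z
    proof (cases "z = x \<or> z = f x")
      case False
      then have "f z \<noteq> x" "f z \<noteq> f x"
        using less.prems(1) by metis+
      then show ?thesis
        using False by (simp add: g less.prems(1))
    qed (auto simp: g)
    have moved_g: "{z. g z \<noteq> z} = {z. f z \<noteq> z} - {x, f x}"
      by (auto simp: g)
    have x_moved: "{x, f x} \<subseteq> {z. f z \<noteq> z}"
      using x by (auto simp: less.prems(1))
    have card_pair: "card {x, f x} = 2"
      using x by simp
    have "card {z. g z \<noteq> z} = card {z. f z \<noteq> z} - 2"
      unfolding moved_g card_pair[symmetric] by (rule card_Diff_subset[OF _ x_moved]) simp
    moreover have "2 \<le> card {z. f z \<noteq> z}"
      unfolding card_pair[symmetric] by (rule card_mono[OF less.prems(2) x_moved])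
    ultimately have card_moved_g: "card {z. g z \<noteq> z} + 2 = card {z. f z \<noteq> z}"
      by simp
    have finite_g: "finite {z. g z \<noteq> z}"
      using less.prems(2) by (simp add: moved_g)
    have IH: "sign g = (-1::int) ^ (card {z. g z \<noteq> z} div 2)"
      using card_moved_g g_involution finite_g by (intro less.hyps) auto
    have "permutation g"
      using g_involution finite_g by (metis bijI' permutation)
    then have "sign (Transposition.transpose x (f x) \<circ> g) = - sign g"
      using x by (simp add: sign_compose permutation_swap_id sign_swap_id)
    moreover have "Transposition.transpose x (f x) \<circ> g = f"
      by (auto simp: g_def)
    ultimately have "sign f = - sign g"
      by simp
    then show ?thesis
      by (simp add: IH flip: card_moved_g)
  qed
qed

definition swap_pair :: "nat \<Rightarrow> nat \<Rightarrow> nat" where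
  "swap_pair n r = (if r < n*n then (r mod n)*n + r div n else r)"

lemma swap_pair_less: "r < n*n \<Longrightarrow> swap_pair n r < n*n"
  by (simp add: swap_pair_def pair_component_less pair_index_less)

lemma swap_pair_div [simp]: "r < n*n \<Longrightarrow> swap_pair n r div n = r mod n"
  and swap_pair_mod [simp]: "r < n*n \<Longrightarrow> swap_pair n r mod n = r div n"
  using pair_component_less[of r n] by (simp_all add: swap_pair_def)

lemma swap_pair_swap_pair [simp]: "swap_pair n (swap_pair n r) = r"
proof (cases "r < n*n")
  case True
  then have "swap_pair n (swap_pair n r) = (r div n)*n + r mod n"
    by (simp add: swap_pair_def[of n "swap_pair n r"] swap_pair_less)
  then show ?thesis by simp
qed (simp add: swap_pair_def)

lemma swap_pair_permutes: "swap_pair n permutes {0..<n*n}"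
proof (rule bij_imp_permutes)
  show "bij_betw (swap_pair n) {0..<n*n} {0..<n*n}"
    by (rule bij_betw_byWitness[of _ "swap_pair n"]) (auto simp: swap_pair_less)
qed (simp add: swap_pair_def)

lemma swap_pair_moved: "{r. swap_pair n r \<noteq> r} = {..<n*n} - (\<lambda>i. i*n + i) ` {..<n}"
proof -
  have "swap_pair n r = r \<longleftrightarrow> r div n = r mod n" if "r < n*n" for r
    using that by (metis div_mult_mod_eq swap_pair_def swap_pair_div)
  moreover have "r \<in> (\<lambda>i. i*n + i) ` {..<n} \<longleftrightarrow> r < n*n \<and> r div n = r mod n" for r
  proof
    assume r: "r < n*n \<and> r div n = r mod n"
    then have "r = (r div n)*n + r div n"
      by (metis div_mult_mod_eq)
    moreover have "r div n < n"
      using r pair_component_less by blast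
    ultimately show "r \<in> (\<lambda>i. i*n + i) ` {..<n}" by blast
  qed (auto simp: pair_index_less)
  ultimately show ?thesis
    by (auto simp: swap_pair_def)
qed

lemma card_swap_pair_moved: "card {r. swap_pair n r \<noteq> r} = n*n - n"
proof -
  have "inj_on (\<lambda>i. i*n + i) {..<n}"
    by (rule inj_onI) (metis add.commute mult_Suc_right mult.commute mult_cancel1 nat.distinct(1))
  then have "card ((\<lambda>i. i*n + i) ` {..<n}) = n"
    by (simp add: card_image)
  moreover have "(\<lambda>i. i*n + i) ` {..<n} \<subseteq> {..<n*n}"
    by (auto simp: pair_index_less)
  ultimately show ?thesis
    by (simp add: swap_pair_moved card_Diff_subset)
qed

lemma neg_one_power_half_square: "(-1::int) ^ ((n*n - n) div 2) = (-1) ^ (n div 2)"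
proof -
  have "even ((n*n - n) div 2) \<longleftrightarrow> even (n div 2)"
  proof (cases "even n")
    case True
    then obtain m where n: "n = 2*m" ..
    then have "(n*n - n) div 2 = m * (2*m - 1)"
      by (simp add: algebra_simps diff_mult_distrib2)
    then show ?thesis using n by (cases m) auto
  next
    case False
    then obtain m where n: "n = 2*m + 1" using oddE by blast
    then have "(n*n - n) div 2 = m * (2*m + 1)"
      by (simp add: algebra_simps)
    then show ?thesis using n by auto
  qed
  then show ?thesis by (simp add: minus_one_power_iff)
qed

lemma sign_swap_pair: "sign (swap_pair n) = (-1) ^ (n div 2)"
proof -
  have "sign (swap_pair n) = (-1::int) ^ (card {r. swap_pair n r \<noteq> r} div 2)"
    by (rule sign_involution) (simp_all add: swap_pair_moved)
  then show ?thesis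
    by (simp add: card_swap_pair_moved neg_one_power_half_square)
qed

section \<open>Determinants of pair-indexed matrices\<close>

lemma det_permute_cols:
  assumes A: "A \<in> carrier_mat n n" and p: "p permutes {0..<n}"
  shows "det (mat n n (\<lambda>(i,j). A $$ (i, p j))) = signof p * det A"
proof -
  have "mat n n (\<lambda>(i,j). A $$ (i, p j)) = transpose_mat (mat n n (\<lambda>(i,j). transpose_mat A $$ (p i, j)))"
    using A p by (intro eq_matI) (auto simp: permutes_in_image)
  then have "det (mat n n (\<lambda>(i,j). A $$ (i, p j))) = det (mat n n (\<lambda>(i,j). transpose_mat A $$ (p i, j)))"
    by (metis det_transpose mat_carrier)
  also have "\<dots> = signof p * det A"
    using A p by (simp add: det_permute_rows det_transpose)
  finally show ?thesis .
qed

lemma det_pair_mat_swap_rows: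
  "det (pair_mat n (\<lambda>i k j l. f k i j l)) = (-1) ^ (n div 2) * det (pair_mat n f)"
proof -
  have "pair_mat n (\<lambda>i k j l. f k i j l) = mat (n*n) (n*n) (\<lambda>(r,c). pair_mat n f $$ (swap_pair n r, c))"
    by (intro eq_matI) (auto simp: swap_pair_less)
  then show ?thesis
    by (simp add: det_permute_rows[OF _ swap_pair_permutes] sign_swap_pair)
qed

lemma det_pair_mat_swap_cols:
  "det (pair_mat n (\<lambda>i k j l. f i k l j)) = (-1) ^ (n div 2) * det (pair_mat n f)"
proof -
  have "pair_mat n (\<lambda>i k j l. f i k l j) = mat (n*n) (n*n) (\<lambda>(r,c). pair_mat n f $$ (r, swap_pair n c))"
    by (intro eq_matI) (auto simp: swap_pair_less)
  then show ?thesis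
    by (simp add: det_permute_cols[OF _ swap_pair_permutes] sign_swap_pair)
qed

lemma div_mod_last_block:
  assumes "k*n \<le> s" "s < k*n + (n::nat)"
  shows "s div n = k" "s mod n = s - k*n"
proof -
  obtain d where "s = k*n + d" "d < n"
    using assms by (metis add_less_cancel_left le_add_diff_inverse)
  then show "s div n = k" "s mod n = s - k*n" by simp_all
qed

definition block_diag_mat :: "nat \<Rightarrow> nat \<Rightarrow> (nat \<Rightarrow> 'a::zero mat) \<Rightarrow> 'a mat" where
  "block_diag_mat k n D = mat (k*n) (k*n)
     (\<lambda>(r,c). if r div n = c div n then D (r div n) $$ (r mod n, c mod n) else 0)"

lemma block_diag_mat_carrier [simp]: "block_diag_mat k n D \<in> carrier_mat (k*n) (k*n)"
  by (simp add: block_diag_mat_def)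

lemma dim_block_diag_mat [simp]:
  "dim_row (block_diag_mat k n D) = k*n" "dim_col (block_diag_mat k n D) = k*n"
  by (simp_all add: block_diag_mat_def)

lemma block_diag_mat_Suc:
  assumes "D k \<in> carrier_mat n n"
  shows "block_diag_mat (Suc k) n D =
    four_block_mat (block_diag_mat k n D) (0\<^sub>m (k*n) n) (0\<^sub>m n (k*n)) (D k)"
proof (rule eq_matI)
  fix r c assume "r < dim_row (four_block_mat (block_diag_mat k n D) (0\<^sub>m (k*n) n) (0\<^sub>m n (k*n)) (D k))"
    and "c < dim_col (four_block_mat (block_diag_mat k n D) (0\<^sub>m (k*n) n) (0\<^sub>m n (k*n)) (D k))"
  then have rc: "r < k*n + n" "c < k*n + n"
    using assms by simp_all
  have low: "s div n < k" if "s < k*n" for s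
    using that by (simp add: less_mult_imp_div_less)
  show "block_diag_mat (Suc k) n D $$ (r,c) =
    four_block_mat (block_diag_mat k n D) (0\<^sub>m (k*n) n) (0\<^sub>m n (k*n)) (D k) $$ (r,c)"
    using rc assms low[of r] low[of c] div_mod_last_block[of k n r] div_mod_last_block[of k n c]
    by (cases "r < k*n"; cases "c < k*n") (auto simp: block_diag_mat_def)
qed (use assms in \<open>auto simp: block_diag_mat_def\<close>)

lemma det_block_diag_mat:
  assumes "\<And>i. i < k \<Longrightarrow> D i \<in> carrier_mat n n"
  shows "det (block_diag_mat k n (D :: nat \<Rightarrow> 'a::idom mat)) = (\<Prod>i<k. det (D i))"
  using assms
proof (induction k)
  case 0
  then show ?case by (simp add: block_diag_mat_def)
next
  case (Suc k)
  then have "D k \<in> carrier_mat n n" by simp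
  then have "det (block_diag_mat (Suc k) n D) = det (block_diag_mat k n D) * det (D k)"
    by (simp add: block_diag_mat_Suc det_four_block_mat_upper_right_zero[of _ "k*n" _ n])
  then show ?case
    using Suc by simp
qed

lemma det_pair_mat_block_diag:
  assumes "\<And>i. i < n \<Longrightarrow> D i \<in> carrier_mat n n"
  shows "det (pair_mat n (\<lambda>i k j l. if i = j then D i $$ (k,l) else 0)) = (\<Prod>i<n. det (D i :: 'a::idom mat))"
proof -
  have "pair_mat n (\<lambda>i k j l. if i = j then D i $$ (k,l) else 0) = block_diag_mat n n D"
    by (simp add: pair_mat_def block_diag_mat_def)
  then show ?thesis
    using det_block_diag_mat[OF assms] by simp
qed

lemma det_pair_mat_twisted_blocks:
  assumes "\<And>i. i < n \<Longrightarrow> D i \<in> carrier_mat n n"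
  shows "det (pair_mat n (\<lambda>i k j l. if i = l then D i $$ (k,j) else 0)) =
    (-1) ^ (n div 2) * (\<Prod>i<n. det (D i :: 'a::idom mat))"
  using det_pair_mat_swap_cols[of n "\<lambda>i k j l. if i = j then D i $$ (k,l) else 0"]
  by (simp add: det_pair_mat_block_diag[OF assms])

lemma det_pair_mat_tensor_identity:
  assumes "C \<in> carrier_mat n n"
  shows "det (pair_mat n (\<lambda>i k j l. if k = l then C $$ (i,j) else 0)) = det (C :: 'a::idom mat) ^ n"
proof -
  have "det (pair_mat n (\<lambda>i k j l. if k = l then C $$ (i,j) else 0)) =
    (-1) ^ (n div 2) * det (pair_mat n (\<lambda>i k j l. if k = j then C $$ (i,l) else 0))"
    using det_pair_mat_swap_cols[of n "\<lambda>i k j l. if k = j then C $$ (i,l) else 0"] by simp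
  also have "det (pair_mat n (\<lambda>i k j l. if k = j then C $$ (i,l) else 0)) =
    (-1) ^ (n div 2) * det (pair_mat n (\<lambda>i k j l. if i = j then C $$ (k,l) else 0))"
    using det_pair_mat_swap_rows[of n "\<lambda>i k j l. if i = j then C $$ (k,l) else 0"] by simp
  also have "det (pair_mat n (\<lambda>i k j l. if i = j then C $$ (k,l) else 0)) = det C ^ n"
    using det_pair_mat_block_diag[of n "\<lambda>_. C"] assms by simp
  finally show ?thesis
    by simp
qed

section \<open>Diagonal and Vandermonde matrices\<close>

lemma diag_matrix_eq_mat_diag: "diag_matrix n d = mat_diag n d"
  by (auto simp: diag_matrix_def mat_diag_def)

lemma det_mat_diag: "det (mat_diag n d) = (\<Prod>i<n. d i :: 'a::comm_ring_1)"
proof -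
  have "det (mat_diag n d) = prod_list (diag_mat (mat_diag n d))"
    by (rule det_upper_triangular[of _ n]) (auto simp: mat_diag_def upper_triangular_def)
  then show ?thesis
    by (simp add: prod_list_diag_prod mat_diag_def atLeast0LessThan)
qed

lemma dim_mat_diag [simp]: "dim_row (mat_diag n d) = n" "dim_col (mat_diag n d) = n"
  by (simp_all add: mat_diag_def)

lemma mat_diag_pow: "mat_diag n d ^\<^sub>m j = mat_diag n (\<lambda>i. d i ^ j :: 'a::comm_semiring_1)"
  by (induction j) (simp_all add: mult.commute)

definition vandermonde_mat :: "nat \<Rightarrow> (nat \<Rightarrow> 'a::comm_ring_1) \<Rightarrow> 'a mat" where
  "vandermonde_mat n x = mat n n (\<lambda>(i,j). x i ^ j)"

lemma vandermonde_mat_carrier [simp]: "vandermonde_mat n x \<in> carrier_mat n n"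
  by (simp add: vandermonde_mat_def)

lemma dim_vandermonde_mat [simp]:
  "dim_row (vandermonde_mat n x) = n" "dim_col (vandermonde_mat n x) = n"
  by (simp_all add: vandermonde_mat_def)

lemma index_vandermonde_mat [simp]: "i < n \<Longrightarrow> j < n \<Longrightarrow> vandermonde_mat n x $$ (i,j) = x i ^ j"
  by (simp add: vandermonde_mat_def)

lemma vdm_delta_Suc:
  "vdm_delta (Suc n) x = (\<Prod>i<n. x (Suc i) - x 0) * vdm_delta n (\<lambda>i. x (Suc i))"
proof -
  have "vdm_delta (Suc n) x = (\<Prod>t<n. \<Prod>s<Suc t. x (Suc t) - x s)"
    by (simp add: vdm_delta_def prod.lessThan_Suc_shift del: prod.lessThan_Suc)
  also have "\<dots> = (\<Prod>t<n. (x (Suc t) - x 0) * (\<Prod>s<t. x (Suc t) - x (Suc s)))"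
    by (simp only: prod.lessThan_Suc_shift)
  finally show ?thesis
    by (simp add: prod.distrib vdm_delta_def)
qed

text \<open>Right multiplication by \<open>column_shift_mat n c\<close> subtracts \<open>c\<close> times column \<open>j - 1\<close>
  from column \<open>j\<close>, for every \<open>j \<ge> 1\<close>.\<close>
definition column_shift_mat :: "nat \<Rightarrow> 'a::comm_ring_1 \<Rightarrow> 'a mat" where
  "column_shift_mat n c = mat n n (\<lambda>(i,j). if i = j then 1 else if Suc i = j then - c else 0)"

lemma column_shift_mat_carrier [simp]: "column_shift_mat n c \<in> carrier_mat n n"
  by (simp add: column_shift_mat_def)

lemma det_column_shift_mat: "det (column_shift_mat n c) = 1"
proof -
  have "det (column_shift_mat n c) = prod_list (diag_mat (column_shift_mat n c))"
    by (rule det_upper_triangular[of _ n]) (auto simp: column_shift_mat_def upper_triangular_def)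
  then show ?thesis
    by (simp add: prod_list_diag_prod column_shift_mat_def)
qed

lemma vandermonde_mat_mult_column_shift:
  "vandermonde_mat (Suc n) x * column_shift_mat (Suc n) (x 0) =
    four_block_mat (1\<^sub>m 1) (0\<^sub>m 1 n) (mat n 1 (\<lambda>_. 1))
      (mat_diag n (\<lambda>i. x (Suc i) - x 0) * vandermonde_mat n (\<lambda>i. x (Suc i)))"
  (is "?VE = ?B")
proof (rule eq_matI)
  fix i j assume "i < dim_row ?B" "j < dim_col ?B"
  then have ij: "i < Suc n" "j < Suc n" by simp_all
  have "?VE $$ (i,j) = (\<Sum>k<Suc n. x i ^ k * column_shift_mat (Suc n) (x 0) $$ (k,j))"
    using ij by (simp add: vandermonde_mat_def column_shift_mat_def scalar_prod_def atLeast0LessThan)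
  also have "\<dots> = (\<Sum>k<Suc n. (if k = j then x i ^ k else 0)
      - (if j \<noteq> 0 \<and> k = j - 1 then x 0 * x i ^ k else 0))"
    using ij by (intro sum.cong) (auto simp: column_shift_mat_def)
  also have "\<dots> = (if j = 0 then 1 else x i ^ j - x 0 * x i ^ (j - 1))"
    using ij by (simp add: sum_subtractf) arith
  also have "\<dots> = ?B $$ (i,j)"
    using ij by (cases i; cases j)
      (auto simp: mat_diag_mult_left[OF vandermonde_mat_carrier] algebra_simps)
  finally show "?VE $$ (i,j) = ?B $$ (i,j)" .
qed (simp_all add: vandermonde_mat_def column_shift_mat_def)

lemma det_vandermonde_mat: "det (vandermonde_mat n x) = vdm_delta n (x :: nat \<Rightarrow> 'a::idom)"
proof (induction n arbitrary: x)
  case 0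
  then show ?case by (simp add: vandermonde_mat_def vdm_delta_def)
next
  case (Suc n)
  have "det (vandermonde_mat (Suc n) x) =
      det (vandermonde_mat (Suc n) x * column_shift_mat (Suc n) (x 0))"
    by (simp add: det_mult[OF vandermonde_mat_carrier column_shift_mat_carrier] det_column_shift_mat)
  also have "\<dots> = det (mat_diag n (\<lambda>i. x (Suc i) - x 0) * vandermonde_mat n (\<lambda>i. x (Suc i)))"
    unfolding vandermonde_mat_mult_column_shift
    by (subst det_four_block_mat_upper_right_zero[of _ 1 _ n]) auto
  also have "\<dots> = vdm_delta (Suc n) x"
    by (simp add: det_mult[of _ n] det_mat_diag Suc.IH vdm_delta_Suc)
  finally show ?case .
qed

section \<open>The determinant of M(A,B)\<close>

lemma conj_mat_diag_eq:
  assumes "P \<in> carrier_mat n n" "Pinv \<in> carrier_mat n n"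
  shows "Pinv * mat_diag n d * P = mat n n (\<lambda>(k,l). \<Sum>m<n. Pinv $$ (k,m) * d m * P $$ (m,l))"
  using assms by (intro eq_matI) (simp_all add: mat_diag_mult_right scalar_prod_def atLeast0LessThan)

lemma M_mat_conj_diag_factorization:
  fixes a b :: "nat \<Rightarrow> 'a::comm_ring_1"
  assumes P_carrier: "P \<in> carrier_mat n n" and Pinv_carrier: "Pinv \<in> carrier_mat n n"
    and "P * Pinv = 1\<^sub>m n" and "Pinv * P = 1\<^sub>m n"
  shows "M_mat n (Pinv * mat_diag n a * P) (mat_diag n b) =
    pair_mat n (\<lambda>i k j l. if k = l then b j ^ i else 0)
    * pair_mat n (\<lambda>i k j l. if i = l then Pinv $$ (k,j) * P $$ (j,i) else 0)
    * pair_mat n (\<lambda>i k j l. if k = l then a i ^ j else 0)"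
proof -
  have "similar_mat_wit (Pinv * mat_diag n a * P) (mat_diag n a) Pinv P"
    using assms by (intro similar_mat_witI[of _ _ n]) auto
  then have "(Pinv * mat_diag n a * P) ^\<^sub>m j = mat n n (\<lambda>(k,l). \<Sum>m<n. Pinv $$ (k,m) * a m ^ j * P $$ (m,l))"
    for j by (simp add: similar_mat_wit_pow_id mat_diag_pow conj_mat_diag_eq[OF P_carrier Pinv_carrier])
  then have "M_mat n (Pinv * mat_diag n a * P) (mat_diag n b) =
      pair_mat n (\<lambda>i k j l. (\<Sum>m<n. Pinv $$ (k,m) * a m ^ j * P $$ (m,l)) * b l ^ i)"
    by (intro eq_matI) (simp_all add: M_mat_def mat_diag_pow mat_diag_mult_right[OF mat_carrier] pair_component_less)
  also have "\<dots> = pair_mat n (\<lambda>i k j l. if k = l then b j ^ i else 0)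
    * pair_mat n (\<lambda>i k j l. if i = l then Pinv $$ (k,j) * P $$ (j,i) else 0)
    * pair_mat n (\<lambda>i k j l. if k = l then a i ^ j else 0)"
    unfolding pair_mat_tensor_identity_mult pair_mat_mult_tensor_identity
    by (rule pair_mat_cong)
      (simp add: if_distrib[of "\<lambda>x. y * x" for y] sum_distrib_left sum_distrib_right ac_simps
        cong: if_cong)
  finally show ?thesis .
qed

lemma det_M_mat_conj_diag:
  fixes a b :: "nat \<Rightarrow> 'a::idom"
  assumes "P \<in> carrier_mat n n" and Pinv_carrier: "Pinv \<in> carrier_mat n n"
    and "P * Pinv = 1\<^sub>m n" and "Pinv * P = 1\<^sub>m n"
  shows "T_det n (Pinv * mat_diag n a * P) (mat_diag n b) =
    (-1) ^ (n div 2) * vdm_delta n a ^ n * vdm_delta n b ^ n * det Pinv ^ n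
      * (\<Prod>s<n. \<Prod>t<n. P $$ (s,t))"
proof -
  let ?F = "pair_mat n (\<lambda>i k j l. if k = l then b j ^ i else 0)"
  let ?G = "pair_mat n (\<lambda>i k j l. if i = l then Pinv $$ (k,j) * P $$ (j,i) else 0)"
  let ?V = "pair_mat n (\<lambda>i k j l. if k = l then a i ^ j else 0)"
  have "?F = pair_mat n (\<lambda>i k j l. if k = l then transpose_mat (vandermonde_mat n b) $$ (i,j) else 0)"
    by (rule pair_mat_cong) simp
  then have det_F: "det ?F = vdm_delta n b ^ n"
    by (simp add: det_pair_mat_tensor_identity det_transpose[OF vandermonde_mat_carrier] det_vandermonde_mat)
  have "?V = pair_mat n (\<lambda>i k j l. if k = l then vandermonde_mat n a $$ (i,j) else 0)"
    by (rule pair_mat_cong) simp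
  then have det_V: "det ?V = vdm_delta n a ^ n"
    by (simp add: det_pair_mat_tensor_identity det_vandermonde_mat)
  have "?G = pair_mat n (\<lambda>i k j l. if i = l then (Pinv * mat_diag n (\<lambda>m. P $$ (m,i))) $$ (k,j) else 0)"
    by (rule pair_mat_cong) (simp add: mat_diag_mult_right[OF Pinv_carrier])
  then have "det ?G = (-1) ^ (n div 2) * (\<Prod>i<n. det Pinv * (\<Prod>m<n. P $$ (m,i)))"
    using Pinv_carrier
    by (simp add: det_pair_mat_twisted_blocks det_mult[OF Pinv_carrier mat_diag_dim] det_mat_diag)
  also have "\<dots> = (-1) ^ (n div 2) * det Pinv ^ n * (\<Prod>s<n. \<Prod>t<n. P $$ (s,t))"
    by (simp add: prod.distrib prod.swap[of "\<lambda>i m. P $$ (m,i)"])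
  finally have det_G: "det ?G = (-1) ^ (n div 2) * det Pinv ^ n * (\<Prod>s<n. \<Prod>t<n. P $$ (s,t))" .
  have "T_det n (Pinv * mat_diag n a * P) (mat_diag n b) = det (?F * ?G * ?V)"
    by (simp add: T_det_def M_mat_conj_diag_factorization[OF assms])
  also have "\<dots> = det ?F * det ?G * det ?V"
    by (simp only: det_mult[OF mult_carrier_mat[OF pair_mat_carrier pair_mat_carrier] pair_mat_carrier]
        det_mult[OF pair_mat_carrier pair_mat_carrier])
  finally show ?thesis
    by (simp add: det_F det_G det_V ac_simps)
qed

theorem mainTheorem5:
  fixes n :: nat and a b :: "nat \<Rightarrow> 'a::field" and P Pinv :: "'a mat"
  assumes "P \<in> carrier_mat n n" and "Pinv \<in> carrier_mat n n"
    and "inverts_mat P Pinv" and "inverts_mat Pinv P"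
  shows "T_det n (Pinv * diag_matrix n a * P) (diag_matrix n b) =
    (-1) ^ (n div 2) * vdm_delta n a ^ n * vdm_delta n b ^ n * (1 / (det P) ^ n)
      * (\<Prod>s<n. \<Prod>t<n. P $$ (s,t))"
proof -
  have P_Pinv: "P * Pinv = 1\<^sub>m n" and Pinv_P: "Pinv * P = 1\<^sub>m n"
    using assms by (simp_all add: inverts_mat_def)
  have "det P * det Pinv = 1"
    using det_mult[OF assms(1,2)] P_Pinv by simp
  then have "det Pinv = 1 / det P"
    by (auto simp: eq_divide_eq mult.commute)
  then show ?thesis
    using det_M_mat_conj_diag[OF assms(1,2) P_Pinv Pinv_P, of a b]
    by (simp add: diag_matrix_eq_mat_diag power_one_over ac_simps)
qed

end
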